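(* Let $a\ge 0$ and let $h$ be as defined in the context. Then for every $x\in[a-1,a+1]$, \[\log h(x)=\log h(a)+\sum_{k=1}^\infty\frac{(-1)^{k-1}}{k}\left(\sum_{n=2}^\infty\frac{u_n}{(n+a)^k}\right)(x-a)^k.\]
   Context: Let $u_n=(-1)^{s_2(n)}$, where $s_2(n)$ is the sum of the binary digits of the non-negative integer $n$ (Thue–Morse sequence with values $\pm1$). For real $x>-2$ define $h(x)=\prod_{n=1}^\infty\left(\frac{2n+x}{2n+1+x}\right)^{u_n}$ (limit of partial products; it converges and is positive). *)

theory Defs
  imports "HOL-Analysis.Analysis"
begin

fun s2 :: "nat \<Rightarrow> nat" where
  "s2 n = (if n = 0 then 0 else n mod 2 + s2 (n div 2))"

definition tm :: "nat \<Rightarrow> real" where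
  "tm n = (-1) ^ s2 n"

definition h :: "real \<Rightarrow> real" where
  "h x = lim (\<lambda>N. \<Prod>n\<in>{1..N}. ((2 * real n + x) / (2 * real n + 1 + x)) powr tm n)"

end

theory Submission
  imports Defs "HOL-Real_Asymp.Real_Asymp"
begin

(* Write t = x - a. Splitting every factor of the product into two logarithms, ln h x - ln h a
   becomes the series of u_n (ln (n + x) - ln (n + a)) over n >= 2: since u_(2m) = u_m and
   u_(2m+1) = - u_m, consecutive terms recombine into the logarithms of the factors, and the
   regrouping is harmless because the terms tend to 0. Now ln (1 + t/(n + a)) is expanded as a
   power series in t. The linear part gives t times the sum of u_n/(n + a), which converges only
   conditionally (alternating pairs of a decreasing null sequence). The remaining double series
   is dominated by (t/(n + a))^2 r^j with r = |t|/(a + 2) < 1, so it converges absolutely and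
   may be summed first over n, which produces the coefficients of the higher powers of t. *)

declare s2.simps [simp del]

lemma tm_double [simp]: "tm (2 * n) = tm n"
  unfolding tm_def by (cases "n = 0") (simp_all add: s2.simps[of "2 * n"])

lemma tm_Suc_double [simp]: "tm (Suc (2 * n)) = - tm n"
  unfolding tm_def by (simp add: s2.simps[of "Suc (2 * n)"])

lemma abs_tm [simp]: "\<bar>tm n\<bar> = 1"
  by (simp add: tm_def)

lemma tendsto_tm_mult_zero:
  "(f \<longlongrightarrow> 0) F \<Longrightarrow> ((\<lambda>x. tm (g x) * f x) \<longlongrightarrow> 0) F"
  by (rule tendsto_rabs_zero_cancel) (simp add: abs_mult tendsto_rabs_zero_iff)

lemma pair_sums_imp_sums:
  fixes f :: "nat \<Rightarrow> 'a::real_normed_vector"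
  assumes "f \<longlonglongrightarrow> 0" and "(\<lambda>m. f (2 * m) + f (Suc (2 * m))) sums s"
  shows "f sums s"
proof -
  have "(\<Sum>i<2 * m. f i) = (\<Sum>i<m. f (2 * i) + f (Suc (2 * i)))" for m
    by (induction m) (simp_all add: algebra_simps)
  with assms(2) have even: "(\<lambda>m. \<Sum>i<2 * m. f i) \<longlonglongrightarrow> s"
    by (simp add: sums_def)
  have "(\<lambda>m. f (2 * m)) \<longlonglongrightarrow> 0"
    by (rule LIMSEQ_subseq_LIMSEQ[OF assms(1), unfolded o_def]) (simp add: strict_mono_def)
  from tendsto_add[OF even this] have odd: "(\<lambda>m. \<Sum>i<Suc (2 * m). f i) \<longlonglongrightarrow> s"
    by simp
  show ?thesis
    unfolding sums_def tendsto_iff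
  proof (intro allI impI)
    fix e :: real assume "e > 0"
    with even odd have "eventually (\<lambda>m. dist (\<Sum>i<2 * m. f i) s < e
        \<and> dist (\<Sum>i<Suc (2 * m). f i) s < e) sequentially"
      by (auto simp: tendsto_iff intro: eventually_conj)
    then obtain M where "\<And>m. m \<ge> M \<Longrightarrow>
        dist (\<Sum>i<2 * m. f i) s < e \<and> dist (\<Sum>i<Suc (2 * m). f i) s < e"
      unfolding eventually_sequentially by blast
    then have "dist (\<Sum>i<n. f i) s < e" if "n \<ge> 2 * M" for n
      using that by (cases "even n") (auto elim!: evenE oddE)
    then show "eventually (\<lambda>n. dist (\<Sum>i<n. f i) s < e) sequentially"
      by (auto simp: eventually_sequentially)
  qed
qed

lemma summable_tm_mult:
  fixes c :: "nat \<Rightarrow> real"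
  assumes decreasing: "\<And>m n. N \<le> m \<Longrightarrow> m \<le> n \<Longrightarrow> c n \<le> c m"
    and "c \<longlonglongrightarrow> 0"
  shows "summable (\<lambda>n. tm n * c n)"
proof -
  have "(\<lambda>m. c (2 * m)) \<longlonglongrightarrow> 0"
    by (rule LIMSEQ_subseq_LIMSEQ[OF assms(2), unfolded o_def]) (simp add: strict_mono_def)
  then have "summable (\<lambda>m. c (2 * m) - c (2 * Suc m))"
    using telescope_sums'[of "\<lambda>m. c (2 * m)"] by (auto simp: sums_iff)
  then have "summable (\<lambda>m. tm (2 * m) * c (2 * m) + tm (Suc (2 * m)) * c (Suc (2 * m)))"
    (is "summable ?pairs")
  proof (rule summable_comparison_test')
    fix m assume "m \<ge> N"
    then show "norm (tm (2 * m) * c (2 * m) + tm (Suc (2 * m)) * c (Suc (2 * m))) \<le> c (2 * m) - c (2 * Suc m)"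
      using decreasing[of "2 * m" "Suc (2 * m)"] decreasing[of "Suc (2 * m)" "2 * Suc m"]
      by (simp add: abs_mult flip: right_diff_distrib)
  qed
  moreover have "(\<lambda>n. tm n * c n) \<longlonglongrightarrow> 0"
    using assms(2) by (rule tendsto_tm_mult_zero)
  moreover obtain s where "?pairs sums s"
    using \<open>summable ?pairs\<close> unfolding summable_def by blast
  ultimately show ?thesis
    unfolding summable_def by (blast intro: pair_sums_imp_sums)
qed

lemma sums_ln_h:
  fixes y :: real
  assumes "y > -2"
  shows "(\<lambda>n. tm (Suc n) * (ln (2 * real (Suc n) + y) - ln (2 * real (Suc n) + 1 + y))) sums ln (h y)"
    (is "?terms sums _")
proof -
  define c where "c n = ln (2 * real n + 1 + y) - ln (2 * real n + y)" for n
  have c_eq: "c n = ln (1 + 1 / (2 * real n + y))" if "n \<ge> 1" for n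
  proof -
    have "2 * real n + y > 0" using that assms by simp
    then have "1 + 1 / (2 * real n + y) = (2 * real n + 1 + y) / (2 * real n + y)"
      by (simp add: field_simps)
    with \<open>2 * real n + y > 0\<close> show ?thesis by (simp add: c_def ln_div)
  qed
  have "summable (\<lambda>n. tm n * c n)"
  proof (rule summable_tm_mult[of 1])
    fix m n :: nat assume "1 \<le> m" "m \<le> n"
    then have "0 < 2 * real m + y" "2 * real m + y \<le> 2 * real n + y"
      using assms by auto
    then have "1 / (2 * real n + y) \<le> 1 / (2 * real m + y)" "0 < 1 + 1 / (2 * real n + y)"
      by (auto intro: divide_left_mono add_pos_pos)
    with \<open>1 \<le> m\<close> \<open>m \<le> n\<close> show "c n \<le> c m"
      unfolding c_eq[OF \<open>1 \<le> m\<close>] c_eq[OF order.trans[OF \<open>1 \<le> m\<close> \<open>m \<le> n\<close>]]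
      by (intro ln_mono) auto
  next
    show "c \<longlonglongrightarrow> 0" unfolding c_def by real_asymp
  qed
  then have "summable (\<lambda>n. - (tm (Suc n) * c (Suc n)))"
    by (subst summable_Suc_iff) (simp add: summable_minus_iff)
  moreover have "- (tm (Suc n) * c (Suc n)) = ?terms n" for n
    by (simp add: c_def algebra_simps)
  ultimately have "summable ?terms"
    by simp
  then obtain L where L: "?terms sums L"
    by (auto simp: summable_def)
  have "(\<Prod>n\<in>{1..N}. ((2 * real n + y) / (2 * real n + 1 + y)) powr tm n)
      = exp (\<Sum>n<N. ?terms n)" for N
    using assms by (simp add: prod.atLeast1_atMost_eq exp_sum powr_def ln_div del: of_nat_Suc)
  then have "(\<lambda>N. \<Prod>n\<in>{1..N}. ((2 * real n + y) / (2 * real n + 1 + y)) powr tm n)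
      \<longlonglongrightarrow> exp L"
    using L by (simp add: sums_def tendsto_exp)
  then have "h y = exp L"
    unfolding h_def by (rule limI)
  with L show ?thesis by simp
qed

lemma sums_ln_h_diff:
  fixes y z :: real
  assumes "y > -2" and "z > -2"
  shows "(\<lambda>n. tm (n + 2) * (ln (real (n + 2) + y) - ln (real (n + 2) + z))) sums (ln (h y) - ln (h z))"
proof (rule pair_sums_imp_sums)
  have "(\<lambda>n. ln (real (n + 2) + y) - ln (real (n + 2) + z)) \<longlonglongrightarrow> 0"
    by real_asymp
  then show "(\<lambda>n. tm (n + 2) * (ln (real (n + 2) + y) - ln (real (n + 2) + z))) \<longlonglongrightarrow> 0"
    by (rule tendsto_tm_mult_zero)
  have "tm (2 * m + 2) * (ln (real (2 * m + 2) + y) - ln (real (2 * m + 2) + z))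
      + tm (Suc (2 * m) + 2) * (ln (real (Suc (2 * m) + 2) + y) - ln (real (Suc (2 * m) + 2) + z))
      = tm (Suc m) * (ln (2 * real (Suc m) + y) - ln (2 * real (Suc m) + 1 + y))
      - tm (Suc m) * (ln (2 * real (Suc m) + z) - ln (2 * real (Suc m) + 1 + z))" for m
  proof -
    have "tm (2 * m + 2) = tm (Suc m)" "tm (Suc (2 * m) + 2) = - tm (Suc m)"
      using tm_double[of "Suc m"] tm_Suc_double[of "Suc m"] by (simp_all add: mult_2)
    then show ?thesis by (simp add: algebra_simps)
  qed
  then show "(\<lambda>m. tm (2 * m + 2) * (ln (real (2 * m + 2) + y) - ln (real (2 * m + 2) + z))
      + tm (Suc (2 * m) + 2) * (ln (real (Suc (2 * m) + 2) + y) - ln (real (Suc (2 * m) + 2) + z)))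
      sums (ln (h y) - ln (h z))"
    using sums_diff[OF sums_ln_h[OF assms(1)] sums_ln_h[OF assms(2)]] by simp
qed

lemma summable_tm_div_power:
  fixes a :: real
  assumes "a > -2" and "k \<ge> 1"
  shows "summable (\<lambda>n. tm (n + 2) / (real (n + 2) + a) ^ k)"
proof -
  have "summable (\<lambda>n. tm n * (1 / (real n + a)) ^ k)"
  proof (rule summable_tm_mult[of 2])
    fix m n :: nat assume "2 \<le> m" "m \<le> n"
    with assms show "(1 / (real n + a)) ^ k \<le> (1 / (real m + a)) ^ k"
      by (intro power_mono divide_left_mono) auto
  next
    have "(\<lambda>n. 1 / (real n + a)) \<longlonglongrightarrow> 0" by real_asymp
    then show "(\<lambda>n. (1 / (real n + a)) ^ k) \<longlonglongrightarrow> 0"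
      using tendsto_power[of _ 0 _ k] \<open>k \<ge> 1\<close> by simp
  qed
  then have "summable (\<lambda>n. tm (n + 2) * (1 / (real (n + 2) + a)) ^ k)"
    by (rule summable_ignore_initial_segment)
  then show ?thesis
    by (simp add: power_one_over)
qed

lemma ln_add_one_minus_sums:
  fixes y :: real
  assumes "\<bar>y\<bar> < 1"
  shows "(\<lambda>j. (-1) ^ Suc j / real (Suc (Suc j)) * y ^ Suc (Suc j)) sums (ln (1 + y) - y)"
  using sums_split_initial_segment[OF ln_series'[OF assms], of 2]
  by (simp add: numeral_2_eq_2 power_minus' mult_ac)

lemma sums_swap:
  fixes F :: "nat \<Rightarrow> nat \<Rightarrow> real"
  assumes rows: "\<And>m. summable (\<lambda>j. norm (F m j))"
    and "summable (\<lambda>m. \<Sum>j. norm (F m j))"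
  shows "(\<lambda>j. \<Sum>m. F m j) sums (\<Sum>m. \<Sum>j. F m j)"
proof -
  have "infsum (\<lambda>j. norm (F m j)) UNIV = (\<Sum>j. norm (F m j))" for m
    using rows by (intro infsumI norm_summable_imp_has_sum) (simp_all add: summable_sums)
  then have abs: "(\<lambda>x. norm (case_prod F x)) summable_on UNIV \<times> UNIV"
    using assms by (subst Infinite_Sum.abs_summable_on_Sigma_iff)
      (simp add: summable_on_UNIV_nonneg_real_iff suminf_nonneg)
  then obtain S where S: "(case_prod F has_sum S) (UNIV \<times> UNIV)"
    using abs_summable_summable summable_on_def by blast
  have "((\<lambda>m. \<Sum>j. F m j) has_sum S) UNIV"
    by (rule has_sum_Sigma'[OF S])
      (simp add: norm_summable_imp_has_sum[OF rows summable_sums[OF summable_norm_cancel[OF rows]]])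
  moreover have "((\<lambda>j. \<Sum>m. F m j) has_sum S) UNIV"
  proof -
    have S_swap: "((\<lambda>(j, m). F m j) has_sum S) (UNIV \<times> UNIV)"
      using S by (subst (asm) has_sum_swap) simp
    have abs_swap: "(\<lambda>(j, m). norm (F m j)) summable_on UNIV \<times> UNIV"
      using abs by (subst (asm) summable_on_swap) (simp add: case_prod_unfold)
    have cols: "summable (\<lambda>m. norm (F m j))" for j
      using summable_on_SigmaD1[OF abs_swap, of j]
      by (simp add: summable_on_UNIV_nonneg_real_iff)
    show ?thesis
      by (rule has_sum_Sigma'[OF S_swap])
        (simp add: norm_summable_imp_has_sum[OF cols summable_sums[OF summable_norm_cancel[OF cols]]])
  qed
  ultimately show ?thesis
    by (metis has_sum_imp_sums sums_unique)
qed

lemma sums_swap_geometric_bound: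
  fixes F :: "nat \<Rightarrow> nat \<Rightarrow> real"
  assumes bound: "\<And>m j. norm (F m j) \<le> g m * r ^ j"
    and "summable g" and "0 \<le> r" and "r < 1"
  shows "(\<lambda>j. \<Sum>m. F m j) sums (\<Sum>m. \<Sum>j. F m j)"
proof (rule sums_swap)
  have geometric: "(\<lambda>j. g m * r ^ j) sums (g m / (1 - r))" for m
    using sums_mult[OF geometric_sums[of r], of "g m"] assms(3,4) by (simp add: field_simps)
  show rows: "summable (\<lambda>j. norm (F m j))" for m
    by (rule summable_comparison_test'[OF sums_summable[OF geometric[of m]]]) (use bound in simp)
  show "summable (\<lambda>m. \<Sum>j. norm (F m j))"
  proof (rule summable_comparison_test'[OF summable_divide[OF \<open>summable g\<close>, of "1 - r"]])
    fix m
    have "(\<Sum>j. norm (F m j)) \<le> (\<Sum>j. g m * r ^ j)"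
      by (rule suminf_le[OF bound rows sums_summable[OF geometric]])
    also have "\<dots> = g m / (1 - r)"
      using geometric[of m] by (rule sums_unique[symmetric])
    finally show "norm (\<Sum>j. norm (F m j)) \<le> g m / (1 - r)"
      using suminf_nonneg[OF rows[of m]] by simp
  qed
qed

lemma abs_ln_series_term_le:
  fixes q r :: real
  assumes "\<bar>q\<bar> \<le> r"
  shows "\<bar>(-1) ^ Suc j / real (Suc (Suc j)) * q ^ Suc (Suc j)\<bar> \<le> q ^ 2 * r ^ j"
proof -
  have div_le: "x / real (Suc (Suc j)) \<le> x" if "0 \<le> x" for x :: real
    using that by (simp add: divide_le_eq mult_le_cancel_left1 del: of_nat_Suc)
  have "\<bar>(-1) ^ Suc j / real (Suc (Suc j)) * q ^ Suc (Suc j)\<bar>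
      = \<bar>q\<bar> ^ Suc (Suc j) / real (Suc (Suc j))"
    by (simp add: abs_mult power_abs del: of_nat_Suc)
  also have "\<dots> \<le> \<bar>q\<bar> ^ Suc (Suc j)"
    by (rule div_le) simp
  also have "\<dots> = \<bar>q\<bar> ^ j * q ^ 2"
    by (simp add: power2_eq_square)
  also have "\<dots> \<le> r ^ j * q ^ 2"
    using assms by (intro mult_right_mono power_mono) auto
  finally show ?thesis by (simp add: mult.commute)
qed

lemma summable_inverse_square_shift:
  fixes c :: real
  assumes "c > 0"
  shows "summable (\<lambda>n. 1 / (real n + c) ^ 2)"
proof (rule summable_comparison_test'[OF inverse_power_summable[of 2]])
  fix n :: nat assume "n \<ge> 1"
  with assms have "real n ^ 2 \<le> (real n + c) ^ 2"
    by (intro power_mono) auto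
  with assms \<open>n \<ge> 1\<close> show "norm (1 / (real n + c) ^ 2) \<le> inverse (real n ^ 2)"
    by (simp add: inverse_eq_divide divide_left_mono)
qed simp

lemma tm_ln_remainder_sums:
  fixes a t :: real
  assumes "a > -2" and "\<bar>t\<bar> < a + 2"
  shows "(\<lambda>j. (-1) ^ Suc j / real (Suc (Suc j))
            * (\<Sum>n. tm (n + 2) / (real (n + 2) + a) ^ Suc (Suc j)) * t ^ Suc (Suc j))
         sums (\<Sum>n. tm (n + 2) * (ln (1 + t / (real (n + 2) + a)) - t / (real (n + 2) + a)))"
proof -
  define b where "b n = real (n + 2) + a" for n
  define r where "r = \<bar>t\<bar> / (a + 2)"
  define F where "F n j = tm (n + 2) * ((-1) ^ Suc j / real (Suc (Suc j)) * (t / b n) ^ Suc (Suc j))"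
    for n j
  have r: "0 \<le> r" "r < 1"
    using assms by (auto simp: r_def)
  have ratio: "\<bar>t / b n\<bar> \<le> r" for n
    using assms by (auto simp: r_def b_def abs_divide intro!: divide_left_mono)
  have "summable (\<lambda>n. t ^ 2 * (1 / (real n + (a + 2)) ^ 2))"
    using assms(1) by (intro summable_mult summable_inverse_square_shift) simp
  then have "summable (\<lambda>n. (t / b n) ^ 2)"
    by (simp add: b_def power_divide add_ac)
  moreover have "norm (F n j) \<le> (t / b n) ^ 2 * r ^ j" for n j
    using abs_ln_series_term_le[OF ratio] by (simp add: F_def abs_mult)
  ultimately have "(\<lambda>j. \<Sum>n. F n j) sums (\<Sum>n. \<Sum>j. F n j)"
    using r by (intro sums_swap_geometric_bound)
  moreover have "(\<Sum>n. F n j) = (-1) ^ Suc j / real (Suc (Suc j))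
            * (\<Sum>n. tm (n + 2) / (real (n + 2) + a) ^ Suc (Suc j)) * t ^ Suc (Suc j)" for j
  proof -
    have "summable (\<lambda>n. tm (n + 2) / (real (n + 2) + a) ^ Suc (Suc j))"
      using assms by (intro summable_tm_div_power) auto
    then have "(\<lambda>n. (-1) ^ Suc j / real (Suc (Suc j)) * (tm (n + 2) / (real (n + 2) + a) ^ Suc (Suc j))
        * t ^ Suc (Suc j)) sums ((-1) ^ Suc j / real (Suc (Suc j))
        * (\<Sum>n. tm (n + 2) / (real (n + 2) + a) ^ Suc (Suc j)) * t ^ Suc (Suc j))"
      by (intro sums_mult2 sums_mult summable_sums)
    then show ?thesis
      by (simp add: F_def b_def power_divide sums_iff ac_simps)
  qed
  moreover have "(\<Sum>j. F n j) = tm (n + 2) * (ln (1 + t / b n) - t / b n)" for n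
  proof -
    have "\<bar>t / b n\<bar> < 1"
      using ratio[of n] r by linarith
    from sums_mult[OF ln_add_one_minus_sums[OF this], of "tm (n + 2)"] show ?thesis
      unfolding F_def by (rule sums_unique[symmetric])
  qed
  ultimately show ?thesis
    by (simp add: b_def)
qed

lemma tm_ln_series_expansion:
  fixes a t L :: real
  assumes "a > -2" and "\<bar>t\<bar> < a + 2"
    and "(\<lambda>n. tm (n + 2) * (ln (real (n + 2) + a + t) - ln (real (n + 2) + a))) sums L"
  shows "(\<lambda>j. let k = Suc j in
            ((-1) ^ (k - 1) / real k) * (\<Sum>n. tm (n + 2) / (real (n + 2) + a) ^ k) * t ^ k) sums L"
    (is "?T sums L")
proof -
  define b where "b n = real (n + 2) + a" for n
  define A1 where "A1 = (\<Sum>n. tm (n + 2) / b n)"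
  have "summable (\<lambda>n. tm (n + 2) / b n)"
    using summable_tm_div_power[OF assms(1), of 1] by (simp add: b_def)
  from sums_mult[OF summable_sums[OF this], of t]
  have linear: "(\<lambda>n. tm (n + 2) * (t / b n)) sums (t * A1)"
    unfolding A1_def by (simp add: ac_simps)
  have "ln (b n + t) - ln (b n) = t / b n + (ln (1 + t / b n) - t / b n)" for n
  proof -
    have "0 < b n" "0 < b n + t"
      using assms by (auto simp: b_def)
    moreover from \<open>0 < b n\<close> have "1 + t / b n = (b n + t) / b n"
      by (simp add: field_simps)
    ultimately have "ln (1 + t / b n) = ln (b n + t) - ln (b n)"
      by (simp add: ln_div)
    then show ?thesis by simp
  qed
  then have "(\<lambda>n. tm (n + 2) * (ln (1 + t / b n) - t / b n)) sums (L - t * A1)"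
    using sums_diff[OF assms(3) linear] by (simp add: b_def algebra_simps)
  then have "(\<lambda>j. ?T (Suc j)) sums (L - t * A1)"
    using tm_ln_remainder_sums[OF assms(1,2)] by (simp add: b_def sums_iff)
  then have "?T sums (L - t * A1 + ?T 0)"
    by (rule sums_Suc_iff[THEN iffD1])
  moreover have "?T 0 = t * A1"
    by (simp add: A1_def b_def)
  ultimately show ?thesis
    by (simp only: diff_add_cancel)
qed

theorem theorem5:
  fixes a x :: real
  assumes "a \<ge> 0" and "a - 1 \<le> x" and "x \<le> a + 1"
  shows "(\<forall>k::nat. k \<ge> 1 \<longrightarrow> summable (\<lambda>n. tm (n + 2) / (real (n + 2) + a) ^ k))
       \<and> (\<lambda>j. let k = Suc j in
              ((-1) ^ (k - 1) / real k)
              * (\<Sum>n. tm (n + 2) / (real (n + 2) + a) ^ k) * (x - a) ^ k)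
           sums (ln (h x) - ln (h a))"
proof
  have a: "a > -2" "\<bar>x - a\<bar> < a + 2"
    using assms by auto
  then show "\<forall>k::nat. k \<ge> 1 \<longrightarrow> summable (\<lambda>n. tm (n + 2) / (real (n + 2) + a) ^ k)"
    using summable_tm_div_power by blast
  have "(\<lambda>n. tm (n + 2) * (ln (real (n + 2) + a + (x - a)) - ln (real (n + 2) + a)))
          sums (ln (h x) - ln (h a))"
    using sums_ln_h_diff[of x a] a assms by (simp add: add.assoc)
  then show "(\<lambda>j. let k = Suc j in
              ((-1) ^ (k - 1) / real k)
              * (\<Sum>n. tm (n + 2) / (real (n + 2) + a) ^ k) * (x - a) ^ k)
           sums (ln (h x) - ln (h a))"
    by (rule tm_ln_series_expansion[OF a])
qed

end
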